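(* Let $C$ be a choice function. Then $C$ is consistent if and only if $\emptyset\notin\mathrm{Ex}(\mathcal{A}_C)$. Moreover, if $C$ is consistent, then $C_{\mathrm{Ex}(\mathcal{A}_C)}(A)=\mathrm{Ex}(C)(A)$ for all $A\in\mathscr{Q}$.
   Context: Let $\mathcal{X}$ be a nonempty set and let $\mathscr{V}$ be the real vector space of all functions $u:\mathcal{X}\to\mathbb{R}$ (options), with pointwise operations. For $u,v\in\mathscr{V}$, $u\le v$ iff $u(x)\le v(x)$ for all $x\in\mathcal{X}$, and $u<v$ iff $u\le v$ and $u\neq v$. Let $\mathscr{V}_{>0}=\{u\in\mathscr{V}:0<u\}$ and $\mathscr{V}^s_{>0}=\{\{u\}:u\in\mathscr{V}_{>0}\}$. Let $\mathscr{Q}$ be the set of all finite subsets of $\mathscr{V}$ (including $\emptyset$). For $A\in\mathscr{Q}$ and $u\in\mathscr{V}$, $A-u=\{v-u:v\in A\}$. For a positive integer $n$, $\mathbb{R}^{n,+}=\{\boldsymbol\lambda\in\mathbb{R}^n:\lambda_j\ge0\ \forall j,\ \sum_j\lambda_j>0\}$, and for $\boldsymbol\lambda\in\mathbb{R}^n$, $\mathbf u=(u_1,\dots,u_n)\in\mathscr{V}^n$, $\boldsymbol\lambda\mathbf u=\sum_{j=1}^n\lambda_ju_j$. A choice function is a map $C:\mathscr{Q}\to\mathscr{Q}$ with $C(A)\subseteq A$ for all $A$; its rejection function is $R_C(A)=A\setminus C(A)$, and $K_C=\{A\in\mathscr{Q}:0\notin C(A\cup\{0\})\}$. $C$ is coherent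 if: (C0) $C(A)\neq\emptyset$ for all nonempty $A\in\mathscr{Q}$; (C1) for all $A\in\mathscr{Q}$ and $u\in A$: $u\in C(A)\iff 0\in C(A-u)$; (C2) $\{u\}\in K_C$ for all $u\in\mathscr{V}_{>0}$; (C3) for all $A,B\in K_C$ and all maps $\boldsymbol\lambda:A\times B\to\mathbb{R}^{2,+}$, $\{\boldsymbol\lambda(\mathbf u)\mathbf u:\mathbf u\in A\times B\}\in K_C$; (C4) $A\subseteq B\Rightarrow R_C(A)\subseteq R_C(B)$ for all $A,B\in\mathscr{Q}$. $\mathcal{C}$ denotes the set of coherent choice functions. For a choice function $C$, $\mathcal C_C=\{C'\in\mathcal C: C'(A)\subseteq C(A)\text{ for all }A\in\mathscr{Q}\}$; $C$ is called consistent if $\mathcal C_C\neq\emptyset$; and $\mathrm{Ex}(C)(A)=\bigcup_{C'\in\mathcal C_C}C'(A)$ for all $A\in\mathscr{Q}$ (an empty union being $\emptyset$). A set of desirable option sets is any $K\subseteq\mathscr{Q}$. It is coherent if for all $A,B\in K$: (K0) $A\setminus\{0\}\in K$; (K1) $\{0\}\notin K$; (K2) $\mathscr{V}^s_{>0}\subseteq K$; (K3) $\{\boldsymbol\lambda(\mathbf u)\mathbf u:\mathbf u\in A\times B\}\in K$ for every map $\boldsymbol\lambda:A\times B\to\mathbb{R}^{2,+}$; (K4) $A\cup Q\in K$ for all $Q\in\mathscr{Q}$. $\bar{\mathbf K}$ denotes the set of coherent sets of desirable option sets. For $K\subseteq\mathscr{Q}$, the choice function $C_K$ is defined by $C_K(A)=\{u\in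 A:(A-u)\setminus\{0\}\notin K\}$. An assessment is any subset $\mathcal{A}\subseteq\mathscr{Q}$. Let $\bar{\mathbf K}(\mathcal A)=\{K\in\bar{\mathbf K}:\mathcal A\subseteq K\}$ and $\mathrm{Ex}(\mathcal A)=\bigcap\bar{\mathbf K}(\mathcal A)$, with the convention $\bigcap\emptyset=\mathscr{Q}$. For a choice function $C$, $\mathcal A_C=\{C(A)-u:A\in\mathscr{Q},\ u\in R_C(A)\}$. *)

theory Defs
  imports Complex_Main
begin

text \<open>Options are real-valued functions on a nonempty set, represented by a type 'x
(types are nonempty). Option sets in Q are finite sets of options.\<close>

type_synonym 'x opt = "'x \<Rightarrow> real"

definition Qsets :: "'x opt set set" where
  "Qsets = {A. finite A}"

definition pos_opts :: "'x opt set" where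
  "pos_opts = {u. (\<forall>x. 0 \<le> u x) \<and> u \<noteq> (\<lambda>x. 0)}"

definition shift :: "'x opt set \<Rightarrow> 'x opt \<Rightarrow> 'x opt set" where
  "shift A u = (\<lambda>v. (\<lambda>x. v x - u x)) ` A"

text \<open>Maps lambda : A x B -> R^{2,+}, given by their two coordinate functions.\<close>
definition posmap2 :: "'x opt set \<Rightarrow> 'x opt set \<Rightarrow> ('x opt \<Rightarrow> 'x opt \<Rightarrow> real)
    \<Rightarrow> ('x opt \<Rightarrow> 'x opt \<Rightarrow> real) \<Rightarrow> bool" where
  "posmap2 A B l1 l2 \<longleftrightarrow> (\<forall>u\<in>A. \<forall>v\<in>B. l1 u v \<ge> 0 \<and> l2 u v \<ge> 0 \<and> l1 u v + l2 u v > 0)"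

definition comb :: "'x opt set \<Rightarrow> 'x opt set \<Rightarrow> ('x opt \<Rightarrow> 'x opt \<Rightarrow> real)
    \<Rightarrow> ('x opt \<Rightarrow> 'x opt \<Rightarrow> real) \<Rightarrow> 'x opt set" where
  "comb A B l1 l2 = {(\<lambda>x. l1 u v * u x + l2 u v * v x) | u v. u \<in> A \<and> v \<in> B}"

text \<open>A choice function: a map Q -> Q with C(A) \<subseteq> A. Only its values on finite sets matter.\<close>
definition choice_fun :: "('x opt set \<Rightarrow> 'x opt set) \<Rightarrow> bool" where
  "choice_fun C \<longleftrightarrow> (\<forall>A\<in>Qsets. C A \<subseteq> A)"

definition rej :: "('x opt set \<Rightarrow> 'x opt set) \<Rightarrow> 'x opt set \<Rightarrow> 'x opt set" where
  "rej C A = A - C A"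

definition KC :: "('x opt set \<Rightarrow> 'x opt set) \<Rightarrow> 'x opt set set" where
  "KC C = {A\<in>Qsets. (\<lambda>x. 0) \<notin> C (A \<union> {\<lambda>x. 0})}"

definition coherent_choice :: "('x opt set \<Rightarrow> 'x opt set) \<Rightarrow> bool" where
  "coherent_choice C \<longleftrightarrow> choice_fun C \<and>
     (\<forall>A\<in>Qsets. A \<noteq> {} \<longrightarrow> C A \<noteq> {}) \<and>
     (\<forall>A\<in>Qsets. \<forall>u\<in>A. u \<in> C A \<longleftrightarrow> (\<lambda>x. 0) \<in> C (shift A u)) \<and>
     (\<forall>u\<in>pos_opts. {u} \<in> KC C) \<and>
     (\<forall>A\<in>KC C. \<forall>B\<in>KC C. \<forall>l1 l2. posmap2 A B l1 l2 \<longrightarrow> comb A B l1 l2 \<in> KC C) \<and>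
     (\<forall>A\<in>Qsets. \<forall>B\<in>Qsets. A \<subseteq> B \<longrightarrow> rej C A \<subseteq> rej C B)"

definition dominated_coherent :: "('x opt set \<Rightarrow> 'x opt set) \<Rightarrow> ('x opt set \<Rightarrow> 'x opt set) set" where
  "dominated_coherent C = {C'. coherent_choice C' \<and> (\<forall>A\<in>Qsets. C' A \<subseteq> C A)}"

definition consistent :: "('x opt set \<Rightarrow> 'x opt set) \<Rightarrow> bool" where
  "consistent C \<longleftrightarrow> dominated_coherent C \<noteq> {}"

definition ExC :: "('x opt set \<Rightarrow> 'x opt set) \<Rightarrow> 'x opt set \<Rightarrow> 'x opt set" where
  "ExC C A = (\<Union>C'\<in>dominated_coherent C. C' A)"

definition coherent_K :: "'x opt set set \<Rightarrow> bool" where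
  "coherent_K K \<longleftrightarrow> K \<subseteq> Qsets \<and>
     (\<forall>A\<in>K. A - {\<lambda>x. 0} \<in> K) \<and>
     {\<lambda>x. 0} \<notin> K \<and>
     (\<forall>u\<in>pos_opts. {u} \<in> K) \<and>
     (\<forall>A\<in>K. \<forall>B\<in>K. \<forall>l1 l2. posmap2 A B l1 l2 \<longrightarrow> comb A B l1 l2 \<in> K) \<and>
     (\<forall>A\<in>K. \<forall>Q\<in>Qsets. A \<union> Q \<in> K)"

definition CK :: "'x opt set set \<Rightarrow> 'x opt set \<Rightarrow> 'x opt set" where
  "CK K A = {u\<in>A. shift A u - {\<lambda>x. 0} \<notin> K}"

definition ExA :: "'x opt set set \<Rightarrow> 'x opt set set" where
  "ExA \<A> = Qsets \<inter> \<Inter>{K. coherent_K K \<and> \<A> \<subseteq> K}"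

definition AC :: "('x opt set \<Rightarrow> 'x opt set) \<Rightarrow> 'x opt set set" where
  "AC C = {shift (C A) u | A u. A \<in> Qsets \<and> u \<in> rej C A}"

end

theory Submission
  imports Defs
begin

text \<open>Coherent choice functions C and coherent sets of desirable option sets K correspond
to each other via K_C and C_K. For a coherent K, the choice function C_K is dominated by C
exactly when K contains every C(A) - u with u rejected from A: one direction is immediate,
and for the other, K3 lets us chain rejections (combining A - u, which contains w - u, with
A - w yields A - u without w - u), so the options outside C(A) can be eliminated one at a time.
Hence \<emptyset> \<notin> Ex(A_C) says that some coherent K contains A_C, and the options chosen by the
natural extension are those chosen by some C_K with A_C \<subseteq> K, i.e. by some dominated
coherent choice function.\<close>

abbreviation rejects :: "'x opt set set \<Rightarrow> 'x opt set \<Rightarrow> 'x opt \<Rightarrow> bool" where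
  "rejects K A u \<equiv> shift A u - {\<lambda>x. 0} \<in> K"

lemma finite_shift: "finite A \<Longrightarrow> finite (shift A u)"
  unfolding shift_def by simp

lemma shift_memI: "v \<in> A \<Longrightarrow> (\<lambda>x. v x - u x) \<in> shift A u"
  unfolding shift_def by blast

lemma zero_in_shift_iff: "(\<lambda>x. 0) \<in> shift A u \<longleftrightarrow> u \<in> A"
  unfolding shift_def by (auto simp: fun_eq_iff) (metis ext)

lemma shift_zero: "shift A (\<lambda>x. 0) = A"
  unfolding shift_def by simp

lemma shift_singleton_self: "shift {u} u = {\<lambda>x. 0}"
  unfolding shift_def by auto

lemma shift_mono: "A \<subseteq> B \<Longrightarrow> shift A u \<subseteq> shift B u"
  unfolding shift_def by auto

lemma coherent_KD:
  assumes "coherent_K K"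
  shows coherent_K_subset_Qsets: "K \<subseteq> Qsets"
    and coherent_K_remove_zero: "A \<in> K \<Longrightarrow> A - {\<lambda>x. 0} \<in> K"
    and coherent_K_zero_notin: "{\<lambda>x. 0} \<notin> K"
    and coherent_K_pos: "u \<in> pos_opts \<Longrightarrow> {u} \<in> K"
    and coherent_K_comb: "A \<in> K \<Longrightarrow> B \<in> K \<Longrightarrow> posmap2 A B l1 l2 \<Longrightarrow> comb A B l1 l2 \<in> K"
    and coherent_K_union: "A \<in> K \<Longrightarrow> Q \<in> Qsets \<Longrightarrow> A \<union> Q \<in> K"
  using assms unfolding coherent_K_def by simp_all

lemma coherent_K_superset:
  assumes "coherent_K K" "A \<in> K" "A \<subseteq> B" "finite B"
  shows "B \<in> K"
  using coherent_K_union[OF assms(1,2), of B] assms(3,4) by (simp add: Qsets_def sup.absorb2)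

lemma coherent_K_empty_notin: "coherent_K K \<Longrightarrow> {} \<notin> K"
  using coherent_K_superset[of K "{}" "{\<lambda>x. 0}"] coherent_K_zero_notin by blast

lemma coherent_K_remove_zero_iff:
  "coherent_K K \<Longrightarrow> finite A \<Longrightarrow> A - {\<lambda>x. 0} \<in> K \<longleftrightarrow> A \<in> K"
  using coherent_K_superset[of K "A - {\<lambda>x. 0}" A] coherent_K_remove_zero by blast

text \<open>Adding w - u to each element of A - w turns it into the corresponding element of A - u,
so combining the two rejections yields the elements of A - u other than w - u.\<close>

lemma rejects_remove:
  assumes K: "coherent_K K" and fin: "finite A" and wu: "w \<noteq> u"
    and ru: "rejects K A u" and rw: "rejects K A w"
  shows "rejects K (A - {w}) u"
proof -
  define l1 :: "'a opt \<Rightarrow> 'a opt \<Rightarrow> real" where "l1 = (\<lambda>s t. 1)"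
  define l2 :: "'a opt \<Rightarrow> 'a opt \<Rightarrow> real" where
    "l2 = (\<lambda>s t. if s = (\<lambda>x. w x - u x) then 1 else 0)"
  let ?S = "shift A u - {\<lambda>x. 0}" and ?T = "shift A w - {\<lambda>x. 0}"
  have "posmap2 ?S ?T l1 l2" unfolding posmap2_def l1_def l2_def by auto
  then have comb_K: "comb ?S ?T l1 l2 - {\<lambda>x. 0} \<in> K"
    using K ru rw by (blast intro: coherent_K_comb coherent_K_remove_zero)
  have "comb ?S ?T l1 l2 - {\<lambda>x. 0} \<subseteq> shift (A - {w}) u - {\<lambda>x. 0}"
  proof
    fix r assume r: "r \<in> comb ?S ?T l1 l2 - {\<lambda>x. 0}"
    then obtain s t where st: "s \<in> ?S" "t \<in> ?T" "r = (\<lambda>x. l1 s t * s x + l2 s t * t x)"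
      unfolding comb_def by blast
    obtain a where a: "a \<in> A" "s = (\<lambda>x. a x - u x)" using st(1) unfolding shift_def by blast
    obtain b where b: "b \<in> A" "t = (\<lambda>x. b x - w x)" using st(2) unfolding shift_def by blast
    show "r \<in> shift (A - {w}) u - {\<lambda>x. 0}"
    proof (cases "s = (\<lambda>x. w x - u x)")
      case True
      then have "r = (\<lambda>x. b x - u x)" using st(3) b unfolding l1_def l2_def by auto
      moreover have "b \<noteq> w" using st(2) b by auto
      ultimately show ?thesis using r b shift_memI[of b "A - {w}" u] by auto
    next
      case False
      then have "r = s" and "a \<noteq> w" using st(3) a unfolding l1_def l2_def by auto
      then show ?thesis using r a shift_memI[of a "A - {w}" u] by auto
    qed
  qed
  then show ?thesis
    using coherent_K_superset[OF K comb_K] fin by (simp add: finite_shift)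
qed

lemma rejects_diff:
  assumes K: "coherent_K K" and fin: "finite A" and EA: "E \<subseteq> A"
    and rE: "\<forall>d\<in>E. rejects K A d" and v: "v \<in> A - E" and rv: "rejects K A v"
  shows "rejects K (A - E) v"
proof -
  have "finite E" using fin EA by (rule rev_finite_subset)
  then show ?thesis using fin EA rE v rv
  proof (induction E arbitrary: A rule: finite_induct)
    case empty
    then show ?case by simp
  next
    case (insert w E)
    let ?A = "A - {w}"
    have "\<forall>d\<in>E. rejects K ?A d" and "rejects K ?A v"
      using insert.prems insert.hyps(2) by (auto intro: rejects_remove[OF K])
    moreover have "finite ?A" "E \<subseteq> ?A" "v \<in> ?A - E" using insert.prems insert.hyps(2) by auto
    ultimately have "rejects K (?A - E) v" using insert.IH by blast
    moreover have "?A - E = A - insert w E" by auto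
    ultimately show ?case by simp
  qed
qed

lemma shift_in_K_if_CK_subset:
  assumes K: "coherent_K K" and fin: "finite A" and CK_B: "CK K A \<subseteq> B" and BA: "B \<subseteq> A"
    and u: "u \<in> A - B"
  shows "shift B u \<in> K"
proof -
  let ?E = "A - B - {u}"
  have rejected: "\<And>d. d \<in> A - B \<Longrightarrow> rejects K A d" using CK_B unfolding CK_def by auto
  have "rejects K (A - ?E) u"
    using rejects_diff[OF K fin, of ?E u] rejected u by auto
  moreover have "A - ?E = insert u B" using BA u by auto
  moreover have "shift (insert u B) u - {\<lambda>x. 0} = shift B u"
    using u zero_in_shift_iff[of B u] shift_singleton_self[of u]
    unfolding shift_def by auto
  ultimately show ?thesis by simp
qed

lemma coherent_choiceD:
  assumes "coherent_choice C"
  shows coherent_choice_subset: "A \<in> Qsets \<Longrightarrow> C A \<subseteq> A"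
    and coherent_choice_nonempty: "A \<in> Qsets \<Longrightarrow> A \<noteq> {} \<Longrightarrow> C A \<noteq> {}"
    and coherent_choice_shift: "A \<in> Qsets \<Longrightarrow> u \<in> A \<Longrightarrow> u \<in> C A \<longleftrightarrow> (\<lambda>x. 0) \<in> C (shift A u)"
    and coherent_choice_pos: "\<forall>u\<in>pos_opts. {u} \<in> KC C"
    and coherent_choice_comb:
      "\<forall>A\<in>KC C. \<forall>B\<in>KC C. \<forall>l1 l2. posmap2 A B l1 l2 \<longrightarrow> comb A B l1 l2 \<in> KC C"
    and coherent_choice_rej_mono:
      "A \<in> Qsets \<Longrightarrow> B \<in> Qsets \<Longrightarrow> A \<subseteq> B \<Longrightarrow> rej C A \<subseteq> rej C B"
  using assms unfolding coherent_choice_def choice_fun_def by simp_all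

lemma KC_CK: assumes K: "coherent_K K" shows "KC (CK K) = K"
proof -
  have "A \<in> KC (CK K) \<longleftrightarrow> finite A \<and> A - {\<lambda>x. 0} \<in> K" for A
    unfolding KC_def CK_def Qsets_def by (auto simp: shift_zero)
  moreover have "A \<in> K \<Longrightarrow> finite A" for A
    using coherent_K_subset_Qsets[OF K] unfolding Qsets_def by blast
  ultimately show ?thesis using coherent_K_remove_zero_iff[OF K] by blast
qed

lemma CK_nonempty:
  assumes K: "coherent_K K" and fin: "finite A" and ne: "A \<noteq> {}"
  shows "CK K A \<noteq> {}"
proof
  assume "CK K A = {}"
  then have "shift {} u \<in> K" if "u \<in> A" for u
    using shift_in_K_if_CK_subset[OF K fin] that by blast
  then show False using ne coherent_K_empty_notin[OF K] by (auto simp: shift_def)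
qed

lemma CK_rej_mono:
  assumes K: "coherent_K K" and AB: "A \<subseteq> B" "finite B"
  shows "rej (CK K) A \<subseteq> rej (CK K) B"
proof
  fix u assume "u \<in> rej (CK K) A"
  then have "u \<in> A" and "rejects K A u" unfolding rej_def CK_def by auto
  moreover have "shift A u - {\<lambda>x. 0} \<subseteq> shift B u - {\<lambda>x. 0}" using AB shift_mono by blast
  ultimately have "u \<in> B" and "rejects K B u"
    using AB coherent_K_superset[OF K] by (auto simp: finite_shift)
  then show "u \<in> rej (CK K) B" unfolding rej_def CK_def by auto
qed

lemma CK_coherent: assumes K: "coherent_K K" shows "coherent_choice (CK K)"
  unfolding coherent_choice_def choice_fun_def KC_CK[OF K]
  using CK_nonempty[OF K] CK_rej_mono[OF K] coherent_KD[OF K]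
  by (auto simp: Qsets_def CK_def shift_zero zero_in_shift_iff)

lemma KC_union:
  assumes C: "coherent_choice C" and A: "A \<in> KC C" and Q: "Q \<in> Qsets"
  shows "A \<union> Q \<in> KC C"
proof -
  have fin: "finite A" "finite Q" using A Q unfolding KC_def Qsets_def by auto
  have "(\<lambda>x. 0) \<in> rej C (A \<union> {\<lambda>x. 0})" using A unfolding KC_def rej_def by auto
  moreover have "rej C (A \<union> {\<lambda>x. 0}) \<subseteq> rej C (A \<union> Q \<union> {\<lambda>x. 0})"
    using coherent_choice_rej_mono[OF C, of "A \<union> {\<lambda>x. 0}" "A \<union> Q \<union> {\<lambda>x. 0}"] fin
    unfolding Qsets_def by auto
  ultimately show ?thesis using fin unfolding KC_def rej_def Qsets_def by auto
qed

lemma KC_coherent: assumes C: "coherent_choice C" shows "coherent_K (KC C)"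
proof -
  have "{\<lambda>x. 0} \<in> Qsets" unfolding Qsets_def by simp
  then have "C {\<lambda>x. 0} = {\<lambda>x. 0}"
    using coherent_choice_nonempty[OF C] coherent_choice_subset[OF C] by blast
  then have "{\<lambda>x. 0} \<notin> KC C" unfolding KC_def by auto
  then show ?thesis
    unfolding coherent_K_def
    using coherent_choice_pos[OF C] coherent_choice_comb[OF C] KC_union[OF C]
    by (auto simp: KC_def Qsets_def)
qed

lemma CK_KC:
  assumes C: "coherent_choice C" and A: "A \<in> Qsets"
  shows "CK (KC C) A = C A"
proof -
  have "u \<in> CK (KC C) A \<longleftrightarrow> u \<in> C A" if u: "u \<in> A" for u
  proof -
    have "shift A u - {\<lambda>x. 0} \<union> {\<lambda>x. 0} = shift A u"
      using u zero_in_shift_iff by blast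
    then have "u \<in> CK (KC C) A \<longleftrightarrow> (\<lambda>x. 0) \<in> C (shift A u)"
      using A u finite_shift unfolding CK_def KC_def Qsets_def by auto
    then show ?thesis using coherent_choice_shift[OF C A u] by simp
  qed
  moreover have "CK (KC C) A \<subseteq> A" unfolding CK_def by auto
  ultimately show ?thesis using coherent_choice_subset[OF C A] by blast
qed

lemma CK_dominated_coherent:
  assumes C: "choice_fun C" and K: "coherent_K K" and AC_K: "AC C \<subseteq> K"
  shows "CK K \<in> dominated_coherent C"
proof -
  have "u \<in> C A" if A: "A \<in> Qsets" and u: "u \<in> CK K A" for A u
  proof (rule ccontr)
    assume u_rej: "u \<notin> C A"
    have uA: "u \<in> A" and not_rej: "\<not> rejects K A u" using u unfolding CK_def by auto
    have "shift (C A) u \<in> K" using AC_K A uA u_rej unfolding AC_def rej_def by blast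
    moreover have "shift (C A) u \<subseteq> shift A u - {\<lambda>x. 0}"
      using C A u_rej shift_mono[of "C A" A u] zero_in_shift_iff[of "C A" u]
      unfolding choice_fun_def by blast
    ultimately show False
      using coherent_K_superset[OF K] not_rej A by (auto simp: Qsets_def finite_shift)
  qed
  then show ?thesis unfolding dominated_coherent_def using CK_coherent[OF K] by blast
qed

lemma AC_subset_KC:
  assumes C: "choice_fun C" and C': "C' \<in> dominated_coherent C"
  shows "AC C \<subseteq> KC C'"
proof
  fix X assume "X \<in> AC C"
  then obtain A u where X: "X = shift (C A) u" and A: "A \<in> Qsets" and u: "u \<in> rej C A"
    unfolding AC_def by blast
  have coh: "coherent_choice C'" and "C' A \<subseteq> C A"
    using C' A unfolding dominated_coherent_def by auto
  then have "CK (KC C') A \<subseteq> C A" using CK_KC[OF coh A] by simp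
  moreover have "C A \<subseteq> A" using C A unfolding choice_fun_def by blast
  ultimately show "X \<in> KC C'"
    using shift_in_K_if_CK_subset[OF KC_coherent[OF coh]] A u X
    unfolding rej_def Qsets_def by blast
qed

lemma consistent_iff_coherent_K:
  assumes "choice_fun C"
  shows "consistent C \<longleftrightarrow> (\<exists>K. coherent_K K \<and> AC C \<subseteq> K)"
  using CK_dominated_coherent[OF assms] AC_subset_KC[OF assms] KC_coherent
  unfolding consistent_def dominated_coherent_def by blast

lemma ExC_eq_Union_CK:
  assumes C: "choice_fun C" and A: "A \<in> Qsets"
  shows "ExC C A = (\<Union>K\<in>{K. coherent_K K \<and> AC C \<subseteq> K}. CK K A)"
proof -
  have "\<exists>K. coherent_K K \<and> AC C \<subseteq> K \<and> C' A = CK K A" if "C' \<in> dominated_coherent C" for C'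
    using that AC_subset_KC[OF C] KC_coherent CK_KC[OF _ A]
    unfolding dominated_coherent_def by blast
  then show ?thesis unfolding ExC_def using CK_dominated_coherent[OF C] by blast
qed

lemma notin_ExA_iff:
  "X \<in> Qsets \<Longrightarrow> X \<notin> ExA \<A> \<longleftrightarrow> (\<exists>K. coherent_K K \<and> \<A> \<subseteq> K \<and> X \<notin> K)"
  unfolding ExA_def by blast

lemma empty_notin_ExA_iff: "{} \<notin> ExA \<A> \<longleftrightarrow> (\<exists>K. coherent_K K \<and> \<A> \<subseteq> K)"
  using notin_ExA_iff[of "{}"] coherent_K_empty_notin by (auto simp: Qsets_def)

lemma CK_ExA:
  assumes "A \<in> Qsets"
  shows "CK (ExA \<A>) A = (\<Union>K\<in>{K. coherent_K K \<and> \<A> \<subseteq> K}. CK K A)"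
  using assms notin_ExA_iff[of "shift A _ - {\<lambda>x. 0}"]
  unfolding CK_def by (auto simp: Qsets_def finite_shift)

theorem theorem4:
  fixes C :: "('x \<Rightarrow> real) set \<Rightarrow> ('x \<Rightarrow> real) set"
  assumes "choice_fun C"
  shows "(consistent C \<longleftrightarrow> {} \<notin> ExA (AC C)) \<and>
         (consistent C \<longrightarrow> (\<forall>A\<in>Qsets. CK (ExA (AC C)) A = ExC C A))"
proof -
  have "CK (ExA (AC C)) A = ExC C A" if "A \<in> Qsets" for A
    using CK_ExA[OF that] ExC_eq_Union_CK[OF assms that] by simp
  then show ?thesis using consistent_iff_coherent_K[OF assms] empty_notin_ExA_iff by blast
qed

end
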